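(* Let $n$ be a positive integer and let $a,b$ be integers with $0\le a,b\le n$. Then there exists an orientation of the $n$-cube $Q_n$ in which every vertex has in-degree equal to $a$ or to $b$ if and only if there exist non-negative integers $s$ and $t$ such that $s+t=2^n$ and $as+bt=n2^{n-1}$.
   Context: The $n$-cube $Q_n$ is the graph whose vertices are the binary $n$-tuples, two vertices being adjacent iff they differ in exactly one coordinate. An orientation assigns to each edge a head and a tail; the in-degree of a vertex is the number of edges whose head is that vertex. *)

theory Defs
  imports Main
begin

definition cube_vertices :: "nat \<Rightarrow> bool list set" where
  "cube_vertices n = {xs. length xs = n}"

definition cube_adj :: "nat \<Rightarrow> bool list \<Rightarrow> bool list \<Rightarrow> bool" where
  "cube_adj n u v \<longleftrightarrow> u \<in> cube_vertices n \<and> v \<in> cube_vertices n \<and>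
     card {i. i < n \<and> u ! i \<noteq> v ! i} = 1"

definition cube_edges :: "nat \<Rightarrow> bool list set set" where
  "cube_edges n = {{u, v} | u v. cube_adj n u v}"

text \<open>An orientation assigns to every edge its head, one of its two endpoints
  (the tail is the other endpoint).\<close>
definition is_orientation :: "nat \<Rightarrow> (bool list set \<Rightarrow> bool list) \<Rightarrow> bool" where
  "is_orientation n h \<longleftrightarrow> (\<forall>e \<in> cube_edges n. h e \<in> e)"

definition in_degree :: "nat \<Rightarrow> (bool list set \<Rightarrow> bool list) \<Rightarrow> bool list \<Rightarrow> nat" where
  "in_degree n h v = card {e \<in> cube_edges n. h e = v}"

end

theory Submission
  imports Defs
begin

(* Necessity is double counting: the in-degrees of any orientation sum to the number of
   edges, n * 2^(n-1); if s vertices have in-degree a and t have in-degree b this is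
   a * s + b * t, with s + t = 2^n.

   For sufficiency an orientation is described by a local rule g x i ("the edge of
   direction i at x points into x"), consistent at both ends of each edge; a set D of
   degrees is realizable if some rule gives every vertex a degree in D.  Three operations
   on realizable sets are proved: reversing all edges (d becomes n - d), adding a square
   factor Q_2 oriented as a 4-cycle (n + 2 and d + 1), and a basic block construction
   realizing {0, q * 2^m} on Q_N for N = q * 2^m + q * r with r <= 2^m, which marks vertices
   by an XOR-label of their coordinates.  Arithmetic shows that every solution (s, t)
   with a <= b, a + b <= n reduces to the block construction after removing a squares;
   the case a + b > n follows by reversing edges. *)

unbundle bit_operations_syntax

definition flip :: "bool list \<Rightarrow> nat \<Rightarrow> bool list" where
  "flip x i = x[i := \<not> x ! i]"

lemma length_flip [simp]: "length (flip x i) = length x"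
  by (simp add: flip_def)

lemma flip_nth: "i < length x \<Longrightarrow> flip x i ! j = (if j = i then \<not> x ! i else x ! j)"
  by (simp add: flip_def nth_list_update)

lemma flip_flip [simp]: "flip (flip x i) i = x"
  by (cases "i < length x") (simp_all add: flip_def list_update_beyond)

lemma flip_neq: "i < length x \<Longrightarrow> flip x i \<noteq> x"
  by (metis flip_nth)

lemma flip_inj: "i < length x \<Longrightarrow> j < length x \<Longrightarrow> flip x i = flip x j \<Longrightarrow> i = j"
  by (metis flip_nth)

lemma take_flip: "i < k \<Longrightarrow> take k (flip x i) = flip (take k x) i"
  by (simp add: flip_def take_update_swap)

lemma cube_adj_iff_flip: "cube_adj n u v \<longleftrightarrow> length u = n \<and> (\<exists>i<n. v = flip u i)"
proof
  assume "cube_adj n u v"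
  then have lu: "length u = n" and lv: "length v = n"
    and "card {i. i < n \<and> u ! i \<noteq> v ! i} = 1"
    by (auto simp: cube_adj_def cube_vertices_def)
  then obtain i where diff: "{i. i < n \<and> u ! i \<noteq> v ! i} = {i}"
    by (auto simp: card_Suc_eq)
  then have "i < n" by auto
  moreover have "v = flip u i"
    by (rule nth_equalityI) (use diff lu lv \<open>i < n\<close> in \<open>auto simp: flip_nth\<close>)
  ultimately show "length u = n \<and> (\<exists>i<n. v = flip u i)"
    using lu by auto
next
  assume "length u = n \<and> (\<exists>i<n. v = flip u i)"
  then obtain i where lu: "length u = n" and "i < n" and v: "v = flip u i" by auto
  then have "{j. j < n \<and> u ! j \<noteq> v ! j} = {i}" by (auto simp: flip_nth)
  then show "cube_adj n u v" using lu v by (simp add: cube_adj_def cube_vertices_def)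
qed

lemma cube_edge_form: "e \<in> cube_edges n \<Longrightarrow> \<exists>v i. length v = n \<and> i < n \<and> e = {v, flip v i}"
  by (auto simp: cube_edges_def cube_adj_iff_flip)

lemma cube_edge_subset: "e \<in> cube_edges n \<Longrightarrow> e \<subseteq> cube_vertices n"
  by (auto simp: cube_edges_def cube_adj_iff_flip cube_vertices_def)

lemma cube_edge_eq:
  assumes "i < length v" "j < length w" "{v, flip v i} = {w, flip w j}"
  shows "j = i \<and> (w = v \<or> w = flip v i)"
proof (cases "w = v")
  case True
  then show ?thesis
    using assms flip_neq[of i v] flip_inj[of i v j] by (auto simp: doubleton_eq_iff)
next
  case False
  then have w: "w = flip v i" and "v = flip w j"
    using assms by (auto simp: doubleton_eq_iff)
  then have "flip w i = flip w j" by (metis flip_flip)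
  then show ?thesis using assms w flip_inj[of i w j] by simp
qed

lemma edges_at_vertex:
  assumes "length v = n"
  shows "{e \<in> cube_edges n. v \<in> e} = (\<lambda>i. {v, flip v i}) ` {..<n}"
proof
  show "{e \<in> cube_edges n. v \<in> e} \<subseteq> (\<lambda>i. {v, flip v i}) ` {..<n}"
  proof
    fix e assume "e \<in> {e \<in> cube_edges n. v \<in> e}"
    then obtain u i where e: "e = {u, flip u i}" "v \<in> e" and "i < n" "length u = n"
      using cube_edge_form by blast
    then have "e = {v, flip v i}" by auto
    then show "e \<in> (\<lambda>i. {v, flip v i}) ` {..<n}" using \<open>i < n\<close> by auto
  qed
  show "(\<lambda>i. {v, flip v i}) ` {..<n} \<subseteq> {e \<in> cube_edges n. v \<in> e}"
    using assms by (auto simp: cube_edges_def cube_adj_iff_flip)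
qed

lemma inj_on_edges_at_vertex: "inj_on (\<lambda>i. {v, flip v i}) {..<length v}"
  by (rule inj_onI) (use cube_edge_eq in blast)

lemma cube_vertices_lists: "cube_vertices n = {xs. set xs \<subseteq> (UNIV :: bool set) \<and> length xs = n}"
  by (auto simp: cube_vertices_def)

lemma finite_cube_vertices: "finite (cube_vertices n)"
  unfolding cube_vertices_lists by (rule finite_lists_length_eq) simp

lemma card_cube_vertices: "card (cube_vertices n) = 2 ^ n"
  using card_lists_length_eq[of "UNIV :: bool set" n] unfolding cube_vertices_lists by simp

lemma finite_cube_edges: "finite (cube_edges n)"
  by (rule finite_subset[of _ "Pow (cube_vertices n)"])
    (use cube_edge_subset finite_cube_vertices in auto)

text \<open>A local rule \<open>g\<close> decides, for each vertex \<open>x\<close> and coordinate \<open>i\<close>, whether the edge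
  of direction \<open>i\<close> at \<open>x\<close> points into \<open>x\<close>.\<close>
definition local_orientation :: "nat \<Rightarrow> (bool list \<Rightarrow> nat \<Rightarrow> bool) \<Rightarrow> bool" where
  "local_orientation n g \<longleftrightarrow>
     (\<forall>x i. length x = n \<longrightarrow> i < n \<longrightarrow> (g (flip x i) i \<longleftrightarrow> \<not> g x i))"

lemma local_orientation_head:
  assumes g: "local_orientation n g" and v: "length v = n" and i: "i < n"
  shows "(\<exists>j<n. {v, flip v i} = {w, flip w j} \<and> g w j) \<longleftrightarrow>
           (w = v \<and> g v i) \<or> (w = flip v i \<and> \<not> g v i)"
proof -
  have antisym: "g (flip v i) i \<longleftrightarrow> \<not> g v i"
    using g v i by (simp add: local_orientation_def)
  show ?thesis
  proof
    assume "\<exists>j<n. {v, flip v i} = {w, flip w j} \<and> g w j"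
    then obtain j where "j < n" and e: "{v, flip v i} = {w, flip w j}" and "g w j" by blast
    moreover have "w \<in> {v, flip v i}"
      using e by blast
    then have "length w = n"
      using v by auto
    ultimately have "j = i" "w = v \<or> w = flip v i"
      using v i cube_edge_eq[of i v j w] by auto
    then show "(w = v \<and> g v i) \<or> (w = flip v i \<and> \<not> g v i)"
      using \<open>g w j\<close> antisym by auto
  next
    assume "(w = v \<and> g v i) \<or> (w = flip v i \<and> \<not> g v i)"
    then have "{v, flip v i} = {w, flip w i} \<and> g w i"
      using antisym by (auto simp: doubleton_eq_iff)
    with i show "\<exists>j<n. {v, flip v i} = {w, flip w j} \<and> g w j"
      by blast
  qed
qed

lemma orientation_of_local:
  assumes g: "local_orientation n g"
  shows "\<exists>h. is_orientation n h \<and>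
               (\<forall>v \<in> cube_vertices n. in_degree n h v = card {i. i < n \<and> g v i})"
proof -
  define h where "h e = (SOME w. \<exists>i<n. e = {w, flip w i} \<and> g w i)" for e
  have head: "h {v, flip v i} = (if g v i then v else flip v i)"
    if v: "length v = n" and i: "i < n" for v i
  proof -
    have "\<exists>j<n. {v, flip v i} = {h {v, flip v i}, flip (h {v, flip v i}) j} \<and> g (h {v, flip v i}) j"
      unfolding h_def
      by (rule someI[of _ "if g v i then v else flip v i"])
        (simp add: local_orientation_head[OF g v i])
    then show ?thesis
      unfolding local_orientation_head[OF g v i] using flip_neq[of i v] v i by auto
  qed
  have orientation: "is_orientation n h"
    unfolding is_orientation_def using cube_edge_form head by fastforce
  have "in_degree n h v = card {i. i < n \<and> g v i}" if v: "length v = n" for v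
  proof -
    have "{e \<in> cube_edges n. h e = v} = {e \<in> {e \<in> cube_edges n. v \<in> e}. h e = v}"
      using orientation unfolding is_orientation_def by auto
    also have "\<dots> = (\<lambda>i. {v, flip v i}) ` {i \<in> {..<n}. h {v, flip v i} = v}"
      unfolding edges_at_vertex[OF v] by blast
    also have "{i \<in> {..<n}. h {v, flip v i} = v} = {i. i < n \<and> g v i}"
      using head[OF v] flip_neq[of _ v] v by (auto split: if_splits)
    moreover have "inj_on (\<lambda>i. {v, flip v i}) {i. i < n \<and> g v i}"
      by (rule inj_on_subset[OF inj_on_edges_at_vertex]) (use v in auto)
    ultimately show ?thesis
      unfolding in_degree_def by (simp add: card_image)
  qed
  with orientation show ?thesis by (auto simp: cube_vertices_def)
qed

text \<open>Handshake lemma: every edge contributes exactly one to the total in-degree.\<close>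
lemma sum_in_degree:
  assumes "is_orientation n h"
  shows "(\<Sum>v \<in> cube_vertices n. in_degree n h v) = card (cube_edges n)"
proof -
  have head: "e \<in> cube_edges n \<Longrightarrow> h e \<in> cube_vertices n" for e
    using assms cube_edge_subset unfolding is_orientation_def by blast
  have "(\<Sum>v \<in> cube_vertices n. in_degree n h v)
        = (\<Sum>v \<in> cube_vertices n. \<Sum>e \<in> cube_edges n. if h e = v then 1 else 0)"
    unfolding in_degree_def using finite_cube_edges by (simp add: sum.If_cases Int_def)
  also have "\<dots> = (\<Sum>e \<in> cube_edges n. \<Sum>v \<in> cube_vertices n. if h e = v then 1 else 0)"
    by (rule sum.swap)
  also have "\<dots> = (\<Sum>e \<in> cube_edges n. 1)"
    using head finite_cube_vertices by (intro sum.cong) (auto simp: sum.If_cases Int_def)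
  finally show ?thesis by simp
qed

text \<open>The number of edges, by the handshake lemma applied to two complementary orientations:
  orient each edge towards the endpoint with a \<open>1\<close>, respectively a \<open>0\<close>, in the flipped
  coordinate.  At every vertex the two in-degrees add up to \<open>n\<close>.\<close>
lemma card_cube_edges: "2 * card (cube_edges n) = n * 2 ^ n"
proof -
  have "local_orientation n (\<lambda>x i. x ! i)" "local_orientation n (\<lambda>x i. \<not> x ! i)"
    by (simp_all add: local_orientation_def flip_nth)
  then obtain h1 h2 where h1: "is_orientation n h1"
      "\<forall>v \<in> cube_vertices n. in_degree n h1 v = card {i. i < n \<and> v ! i}"
    and h2: "is_orientation n h2"
      "\<forall>v \<in> cube_vertices n. in_degree n h2 v = card {i. i < n \<and> \<not> v ! i}"
    using orientation_of_local by meson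
  have "in_degree n h1 v + in_degree n h2 v = n" if "v \<in> cube_vertices n" for v
  proof -
    have "card {i. i < n \<and> v ! i} + card {i. i < n \<and> \<not> v ! i}
          = card ({i. i < n \<and> v ! i} \<union> {i. i < n \<and> \<not> v ! i})"
      by (rule card_Un_disjoint[symmetric]) auto
    also have "{i. i < n \<and> v ! i} \<union> {i. i < n \<and> \<not> v ! i} = {..<n}" by auto
    finally show ?thesis using h1 h2 that by simp
  qed
  then have "(\<Sum>v \<in> cube_vertices n. in_degree n h1 v + in_degree n h2 v) = n * 2 ^ n"
    by (simp add: card_cube_vertices)
  then show ?thesis
    using sum_in_degree[OF h1(1)] sum_in_degree[OF h2(1)] by (simp add: sum.distrib)
qed

definition realizable :: "nat \<Rightarrow> nat set \<Rightarrow> bool" where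
  "realizable n D \<longleftrightarrow>
     (\<exists>g. local_orientation n g \<and> (\<forall>x. length x = n \<longrightarrow> card {i. i < n \<and> g x i} \<in> D))"

lemma orientation_of_realizable:
  assumes "realizable n D"
  shows "\<exists>h. is_orientation n h \<and> (\<forall>v \<in> cube_vertices n. in_degree n h v \<in> D)"
proof -
  obtain g where g: "local_orientation n g"
    and deg: "\<forall>x. length x = n \<longrightarrow> card {i. i < n \<and> g x i} \<in> D"
    using assms by (auto simp: realizable_def)
  from orientation_of_local[OF g] deg show ?thesis
    by (auto simp: cube_vertices_def)
qed

text \<open>Reversing every edge replaces each in-degree \<open>d\<close> by the out-degree \<open>n - d\<close>.\<close>
lemma realizable_complement:
  assumes "realizable n D"
  shows "realizable n ((\<lambda>d. n - d) ` D)"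
proof -
  obtain g where g: "local_orientation n g"
    and deg: "\<forall>x. length x = n \<longrightarrow> card {i. i < n \<and> g x i} \<in> D"
    using assms by (auto simp: realizable_def)
  have "card {i. i < n \<and> \<not> g x i} = n - card {i. i < n \<and> g x i}" for x
  proof -
    have "{i. i < n \<and> \<not> g x i} = {..<n} - {i. i < n \<and> g x i}" by auto
    then show ?thesis by (simp add: card_Diff_subset subset_eq)
  qed
  then have "local_orientation n (\<lambda>x i. \<not> g x i) \<and>
             (\<forall>x. length x = n \<longrightarrow> card {i. i < n \<and> \<not> g x i} \<in> (\<lambda>d. n - d) ` D)"
    using g deg by (auto simp: local_orientation_def)
  then show ?thesis unfolding realizable_def by blast
qed

text \<open>Adding two dimensions raises every in-degree by one: the new square factor
  \<open>Q\<^sub>2\<close> is oriented as a directed 4-cycle, in which every vertex has in-degree one.\<close>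
lemma realizable_add_square:
  assumes "realizable N D"
  shows "realizable (N + 2) ((\<lambda>d. d + 1) ` D)"
proof -
  obtain g where g: "local_orientation N g"
    and deg: "\<forall>x. length x = N \<longrightarrow> card {i. i < N \<and> g x i} \<in> D"
    using assms by (auto simp: realizable_def)
  define g' where "g' x i =
      (if i < N then g (take N x) i
       else if i = N then x ! N \<noteq> x ! (N + 1) else x ! N = x ! (N + 1))" for x i
  have "local_orientation (N + 2) g'"
    unfolding local_orientation_def
  proof (intro allI impI)
    fix x :: "bool list" and i assume "length x = N + 2" "i < N + 2"
    then consider "i < N" | "i = N" | "i = N + 1" by linarith
    then show "g' (flip x i) i \<longleftrightarrow> \<not> g' x i"
      using g \<open>length x = N + 2\<close> unfolding g'_def local_orientation_def
      by cases (simp_all add: take_flip flip_nth)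
  qed
  moreover have "card {i. i < N + 2 \<and> g' x i} \<in> (\<lambda>d. d + 1) ` D" if "length x = N + 2" for x
  proof -
    have "{i. i < N + 2 \<and> g' x i} =
          insert (if x ! N \<noteq> x ! (N + 1) then N else N + 1) {i. i < N \<and> g (take N x) i}"
      unfolding g'_def by auto
    then show ?thesis using deg that by simp
  qed
  ultimately show ?thesis unfolding realizable_def by blast
qed

lemma realizable_add_squares:
  assumes "realizable N D"
  shows "realizable (N + 2 * a) ((\<lambda>d. d + a) ` D)"
proof (induction a)
  case 0
  then show ?case using assms by simp
next
  case (Suc a)
  from realizable_add_square[OF this] show ?case
    by (simp add: image_image add.assoc)
qed

text \<open>XOR with a fixed \<open>c < 2 ^ m\<close> permutes \<open>{..<2 ^ m}\<close>, so exactly \<open>r\<close> of the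
  \<open>j < 2 ^ m\<close> satisfy \<open>c XOR j < r\<close>.\<close>
lemma xor_less_power2: "a < 2 ^ m \<Longrightarrow> b < 2 ^ m \<Longrightarrow> (a :: nat) XOR b < 2 ^ m"
  by (metis take_bit_nat_eq_self_iff take_bit_nat_less_exp take_bit_xor)

lemma card_xor_below:
  assumes "c < 2 ^ m" "r \<le> 2 ^ m"
  shows "card {j. j < 2 ^ m \<and> (c :: nat) XOR j < r} = r"
proof -
  have "bij_betw (\<lambda>j. c XOR j) {j. j < 2 ^ m \<and> c XOR j < r} {..<r}"
    by (rule bij_betw_byWitness[where f' = "\<lambda>j. c XOR j"])
      (use assms xor_less_power2[of c m] in \<open>auto simp: xor.assoc[symmetric]\<close>)
  then show ?thesis by (simp add: bij_betw_same_card)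
qed

lemma card_mod_condition:
  "card {i. i < q * M \<and> P (i mod M)} = q * card {j. j < M \<and> P (j :: nat)}"
proof -
  have "bij_betw (\<lambda>(k, j). k * M + j) ({..<q} \<times> {j. j < M \<and> P j})
          {i. i < q * M \<and> P (i mod M)}"
  proof (rule bij_betw_byWitness[where f' = "\<lambda>i. (i div M, i mod M)"])
    show "\<forall>kj \<in> {..<q} \<times> {j. j < M \<and> P j}. (\<lambda>i. (i div M, i mod M)) ((\<lambda>(k, j). k * M + j) kj) = kj"
      by auto
    show "\<forall>i \<in> {i. i < q * M \<and> P (i mod M)}. (\<lambda>(k, j). k * M + j) (i div M, i mod M) = i"
      by simp
    show "(\<lambda>(k, j). k * M + j) ` ({..<q} \<times> {j. j < M \<and> P j}) \<subseteq> {i. i < q * M \<and> P (i mod M)}"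
    proof clarsimp
      fix k j assume "k < q" "j < M"
      then have "k * M + j < (k + 1) * M" by simp
      also have "\<dots> \<le> q * M" using \<open>k < q\<close> by (intro mult_right_mono) auto
      finally show "k * M + j < q * M" .
    qed
    show "(\<lambda>i. (i div M, i mod M)) ` {i. i < q * M \<and> P (i mod M)} \<subseteq> {..<q} \<times> {j. j < M \<and> P j}"
      by (auto simp: less_mult_imp_div_less) (metis mod_less_divisor mult_0_right neq0_conv not_less0)
  qed
  then have "card ({..<q} \<times> {j. j < M \<and> P j}) = card {i. i < q * M \<and> P (i mod M)}"
    by (rule bij_betw_same_card)
  then show ?thesis by (simp add: card_cartesian_product)
qed

primrec xor_label :: "nat \<Rightarrow> bool list \<Rightarrow> nat \<Rightarrow> nat" where
  "xor_label M x 0 = 0"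
| "xor_label M x (Suc k) = xor_label M x k XOR (if x ! k then k mod M else 0)"

lemma xor_label_less: "xor_label (2 ^ m) x k < 2 ^ m"
  by (induction k) (auto intro!: xor_less_power2)

lemma xor_label_flip:
  "i < length x \<Longrightarrow>
   xor_label M (flip x i) k = (if i < k then xor_label M x k XOR (i mod M) else xor_label M x k)"
proof (induction k)
  case (Suc k)
  then show ?case
    by (cases "i = k") (auto simp: flip_nth xor.assoc, auto simp: flip_nth ac_simps)
qed simp

text \<open>The number of ones of a vertex; flipping a coordinate changes its parity, so the
  even and the odd vertices form the two colour classes of the bipartite graph \<open>Q\<^sub>n\<close>.\<close>
definition weight :: "bool list \<Rightarrow> nat" where
  "weight x = card {j. j < length x \<and> x ! j}"

lemma weight_flip_zero:
  assumes "i < length x" "\<not> x ! i"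
  shows "weight (flip x i) = Suc (weight x)"
proof -
  have "{j. j < length x \<and> flip x i ! j} = insert i {j. j < length x \<and> x ! j}"
    using assms by (auto simp: flip_nth)
  then show ?thesis
    using assms unfolding weight_def by simp
qed

lemma even_weight_flip:
  assumes "i < length x"
  shows "even (weight (flip x i)) \<longleftrightarrow> odd (weight x)"
proof (cases "x ! i")
  case True
  then have "weight x = Suc (weight (flip x i))"
    using assms weight_flip_zero[of i "flip x i"] by (simp add: flip_nth)
  then show ?thesis by simp
next
  case False
  then show ?thesis using assms weight_flip_zero by simp
qed

text \<open>The basic construction, for \<open>P = q * 2 ^ m\<close> and \<open>N = P + q * r\<close> with \<open>r \<le> 2 ^ m\<close>:
  call \<open>x\<close> marked if its label (with \<open>M = 2 ^ m\<close>, over the first \<open>P\<close> coordinates) is \<open>< r\<close>.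
  An even vertex receives exactly its edges of direction \<open>< P\<close> if it is marked, and nothing
  otherwise.  An odd vertex receives every edge except those of direction \<open>i < P\<close> leading to
  a marked neighbour; as the neighbours' labels run through \<open>c XOR (i mod 2 ^ m)\<close>, there are
  exactly \<open>q * r\<close> such edges, leaving in-degree \<open>P\<close>.\<close>
lemma realizable_blocks:
  assumes r: "r \<le> 2 ^ m"
  shows "realizable (q * 2 ^ m + q * r) {0, q * 2 ^ m}"
proof -
  define P where "P = q * 2 ^ m"
  define N where "N = P + q * r"
  define marked where "marked x \<longleftrightarrow> xor_label (2 ^ m) x P < r" for x
  define g where "g x i =
      (if even (weight x) then i < P \<and> marked x else \<not> (i < P \<and> marked (flip x i)))" for x i
  have "local_orientation N g"
    unfolding local_orientation_def g_def using even_weight_flip by auto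
  moreover have "card {i. i < N \<and> g x i} \<in> {0, P}" if x: "length x = N" for x
  proof (cases "even (weight x)")
    case True
    then have "{i. i < N \<and> g x i} = (if marked x then {..<P} else {})"
      unfolding g_def N_def by auto
    then show ?thesis by simp
  next
    case False
    define c where "c = xor_label (2 ^ m) x P"
    have "marked (flip x i) \<longleftrightarrow> c XOR (i mod 2 ^ m) < r" if "i < P" for i
      unfolding marked_def c_def using that x by (simp add: N_def xor_label_flip)
    then have "{i. i < N \<and> g x i} = {..<N} - {i. i < P \<and> c XOR (i mod 2 ^ m) < r}"
      using False unfolding g_def N_def by auto
    moreover have "card {i. i < P \<and> c XOR (i mod 2 ^ m) < r} = q * r"
      using card_mod_condition[of q "2 ^ m" "\<lambda>j. c XOR j < r"]
        card_xor_below[OF xor_label_less r] unfolding P_def c_def by simp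
    ultimately have "card {i. i < N \<and> g x i} = N - q * r"
      by (simp add: card_Diff_subset N_def subset_eq)
    then show ?thesis unfolding N_def by simp
  qed
  ultimately show ?thesis
    unfolding realizable_def N_def P_def by blast
qed

lemma dvd_mult_power2_split:
  "0 < b \<Longrightarrow> b dvd N * 2 ^ j \<Longrightarrow> \<exists>m q. b = 2 ^ m * q \<and> q dvd (N :: nat)"
proof (induction j arbitrary: b)
  case 0
  then show ?case by (intro exI[of _ 0] exI[of _ b]) simp
next
  case (Suc j)
  show ?case
  proof (cases "even b")
    case True
    then obtain b' where b: "b = 2 * b'" by blast
    then have "b' dvd N * 2 ^ j" "0 < b'"
      using Suc.prems by (simp_all add: mult.assoc mult.left_commute)
    then obtain m q where "b' = 2 ^ m * q" "q dvd N" using Suc.IH by blast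
    with b have "b = 2 ^ Suc m * q" by simp
    with \<open>q dvd N\<close> show ?thesis by blast
  next
    case False
    then have "coprime b (2 ^ Suc j)" by simp
    then have "b dvd N" using Suc.prems(2) coprime_dvd_mult_left_iff by blast
    then show ?thesis by (intro exI[of _ 0] exI[of _ b]) simp
  qed
qed

lemma block_shape:
  fixes B N :: nat
  assumes "0 < B" "B \<le> N" "N \<le> 2 * B" "B dvd N * 2 ^ j"
  shows "\<exists>q m r. B = q * 2 ^ m \<and> N = q * 2 ^ m + q * r \<and> r \<le> 2 ^ m"
proof -
  obtain m q where B: "B = 2 ^ m * q" and "q dvd N"
    using dvd_mult_power2_split[OF assms(1) assms(4)] by blast
  then obtain K where N: "N = q * K" by blast
  have "q > 0" using B assms by simp
  have "q * 2 ^ m \<le> q * K" "q * K \<le> q * (2 * 2 ^ m)"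
    using assms B N by (simp_all add: ac_simps)
  then have "2 ^ m \<le> K" "K \<le> 2 * 2 ^ m"
    using \<open>q > 0\<close> by simp_all
  then have "B = q * 2 ^ m \<and> N = q * 2 ^ m + q * (K - 2 ^ m) \<and> K - 2 ^ m \<le> 2 ^ m"
    using B N by (simp add: algebra_simps)
  then show ?thesis by blast
qed

lemma two_valued_sum:
  assumes "finite V" "\<forall>v \<in> V. f v = a \<or> f v = (b :: nat)"
  shows "\<exists>s t. s + t = card V \<and> sum f V = a * s + b * t"
  using assms
proof (induction V rule: finite_induct)
  case empty
  then show ?case by simp
next
  case (insert v V)
  then obtain s t where st: "s + t = card V" and sum: "sum f V = a * s + b * t" by auto
  have card: "card (insert v V) = Suc (card V)" and sum_insert: "sum f (insert v V) = f v + sum f V"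
    using insert by simp_all
  show ?case
  proof (cases "f v = a")
    case True
    then have "Suc s + t = card (insert v V) \<and> sum f (insert v V) = a * Suc s + b * t"
      using st sum card sum_insert by simp
    then show ?thesis by blast
  next
    case False
    then have "f v = b" using insert by simp
    then have "s + Suc t = card (insert v V) \<and> sum f (insert v V) = a * s + b * Suc t"
      using st sum card sum_insert by simp
    then show ?thesis by blast
  qed
qed

lemma sum_in_degree_cube:
  assumes "n > 0" "is_orientation n h"
  shows "(\<Sum>v \<in> cube_vertices n. in_degree n h v) = n * 2 ^ (n - 1)"
proof -
  have "(2 :: nat) ^ n = 2 * 2 ^ (n - 1)"
    using assms(1) by (cases n) auto
  then show ?thesis
    using card_cube_edges[of n] sum_in_degree[OF assms(2)] by simp
qed

text \<open>Sufficiency when \<open>a \<le> b\<close> and \<open>a + b \<le> n\<close>: with \<open>N = n - 2 * a\<close> and \<open>B = b - a\<close>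
  the equation becomes \<open>B * t = N * 2 ^ (n - 1)\<close>, and \<open>t \<le> 2 ^ n\<close> gives \<open>N \<le> 2 * B\<close>.
  Realize \<open>{0, B}\<close> on \<open>Q\<^sub>N\<close> by the block construction and add \<open>a\<close> squares.\<close>
lemma realizable_two_degrees_small:
  fixes n a b s t :: nat
  assumes "n > 0" "a \<le> b" "a + b \<le> n" "s + t = 2 ^ n"
    and sum: "a * s + b * t = n * 2 ^ (n - 1)"
  shows "realizable n {a, b}"
proof -
  define N where "N = n - 2 * a"
  define B where "B = b - a"
  have n: "n = N + 2 * a" and b: "b = B + a"
    unfolding N_def B_def using assms by simp_all
  have two_pow: "(2 :: nat) ^ n = 2 * 2 ^ (n - 1)"
    using assms(1) by (cases n) auto
  have "a * 2 ^ n + B * t = n * 2 ^ (n - 1)"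
    using sum assms(4) unfolding b by (simp add: algebra_simps flip: assms(4))
  moreover have "n * 2 ^ (n - 1) = N * 2 ^ (n - 1) + a * 2 ^ n"
    using n two_pow by (simp add: add_mult_distrib)
  ultimately have Bt: "B * t = N * 2 ^ (n - 1)"
    by simp
  have "realizable N {0, B}"
  proof (cases "N = 0")
    case True
    then show ?thesis by (auto simp: realizable_def local_orientation_def)
  next
    case False
    then have "0 < B" using Bt by (cases "B = 0") auto
    moreover have "B \<le> N" unfolding B_def N_def using assms by simp
    moreover have "N * 2 ^ (n - 1) \<le> (2 * B) * 2 ^ (n - 1)"
      using Bt assms(4) two_pow by (metis le_add2 mult.assoc mult.commute mult_le_mono2)
    then have "N \<le> 2 * B" by simp
    moreover have "B dvd N * 2 ^ (n - 1)" using Bt by (metis dvd_triv_left)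
    ultimately obtain q m r where "B = q * 2 ^ m" "N = q * 2 ^ m + q * r" "r \<le> 2 ^ m"
      using block_shape by blast
    then show ?thesis using realizable_blocks by simp
  qed
  from realizable_add_squares[OF this, of a] show ?thesis
    unfolding n b by (simp add: add.commute)
qed

text \<open>If \<open>a + b > n\<close>, the complementary degrees \<open>n - b, n - a\<close>
  satisfy the hypotheses of the previous lemma (with \<open>s\<close> and \<open>t\<close> exchanged); reverse all edges.\<close>
lemma realizable_two_degrees_ordered:
  fixes n a b s t :: nat
  assumes "n > 0" "a \<le> b" "b \<le> n" "s + t = 2 ^ n"
    and sum: "a * s + b * t = n * 2 ^ (n - 1)"
  shows "realizable n {a, b}"
proof (cases "a + b \<le> n")
  case True
  then show ?thesis using realizable_two_degrees_small assms by blast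
next
  case False
  have "(n - b) * t + b * t = n * t" "(n - a) * s + a * s = n * s"
    using assms(2,3) by (simp_all flip: add_mult_distrib)
  then have "(n - b) * t + (n - a) * s + (a * s + b * t) = n * (s + t)"
    by (simp add: algebra_simps)
  also have "\<dots> = n * 2 ^ (n - 1) + n * 2 ^ (n - 1)"
    using assms(1,4) by (cases n) auto
  finally have "(n - b) * t + (n - a) * s = n * 2 ^ (n - 1)"
    using sum by simp
  with False assms have "realizable n {n - b, n - a}"
    by (intro realizable_two_degrees_small[of n _ _ t s]) auto
  from realizable_complement[OF this] show ?thesis
    using assms(2,3) by (simp add: insert_commute)
qed

lemma realizable_two_degrees:
  fixes n a b s t :: nat
  assumes "n > 0" "a \<le> n" "b \<le> n" "s + t = 2 ^ n"
    and "a * s + b * t = n * 2 ^ (n - 1)"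
  shows "realizable n {a, b}"
proof (cases "a \<le> b")
  case True
  then show ?thesis using realizable_two_degrees_ordered assms by blast
next
  case False
  then have "realizable n {b, a}"
    using realizable_two_degrees_ordered[of n b a t s] assms by (simp add: add.commute)
  then show ?thesis by (simp add: insert_commute)
qed

theorem theorem1:
  fixes n a b :: nat
  assumes "n > 0" and "a \<le> n" and "b \<le> n"
  shows "(\<exists>h. is_orientation n h \<and>
            (\<forall>v \<in> cube_vertices n. in_degree n h v = a \<or> in_degree n h v = b))
         \<longleftrightarrow> (\<exists>s t :: nat. s + t = 2 ^ n \<and> a * s + b * t = n * 2 ^ (n - 1))"
proof
  assume "\<exists>h. is_orientation n h \<and>
            (\<forall>v \<in> cube_vertices n. in_degree n h v = a \<or> in_degree n h v = b)"
  then obtain h where h: "is_orientation n h"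
    and degrees: "\<forall>v \<in> cube_vertices n. in_degree n h v = a \<or> in_degree n h v = b" by blast
  from two_valued_sum[OF finite_cube_vertices degrees]
  show "\<exists>s t. s + t = 2 ^ n \<and> a * s + b * t = n * 2 ^ (n - 1)"
    unfolding sum_in_degree_cube[OF assms(1) h] card_cube_vertices by metis
next
  assume "\<exists>s t :: nat. s + t = 2 ^ n \<and> a * s + b * t = n * 2 ^ (n - 1)"
  then have "realizable n {a, b}"
    using realizable_two_degrees assms by blast
  from orientation_of_realizable[OF this] show "\<exists>h. is_orientation n h \<and>
            (\<forall>v \<in> cube_vertices n. in_degree n h v = a \<or> in_degree n h v = b)" by blast
qed
end
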